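(* If a graph $G$ contains a vertex of degree at least four that is contained in at most one cycle of $G$, then $G\notin\mathcal{G}^{\rm SSP}$.
   Context: All graphs are finite, simple, undirected. For a graph $G$ on $\{1,\ldots,n\}$, $\mathcal{S}(G)$ is the set of real symmetric $n\times n$ matrices $A=(a_{ij})$ with $a_{ij}\neq0$ iff $\{i,j\}\in E(G)$ for $i\neq j$ (diagonal arbitrary). A real symmetric $A$ has the strong spectral property (SSP) if the only real symmetric $X$ with $A\circ X=0$, $I\circ X=0$, $AX-XA=0$ is $X=0$ ($\circ$ = entrywise product). $\mathcal{G}^{\rm SSP}$ is the set of graphs $G$ such that every matrix in $\mathcal{S}(G)$ has the SSP. *)

theory Defs
  imports "HOL-Analysis.Analysis"
begin

definition simple_graph :: "('n::finite \<Rightarrow> 'n \<Rightarrow> bool) \<Rightarrow> bool" where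
  "simple_graph E \<longleftrightarrow> (\<forall>u v. E u v \<longleftrightarrow> E v u) \<and> (\<forall>v. \<not> E v v)"

definition degree :: "('n::finite \<Rightarrow> 'n \<Rightarrow> bool) \<Rightarrow> 'n \<Rightarrow> nat" where
  "degree E v = card {u. E v u}"

text \<open>A cycle of G, viewed as a subgraph (its edge set): given by a list of
k \<ge> 3 distinct vertices, consecutive ones (cyclically) adjacent.\<close>
definition cycle_edges :: "'n list \<Rightarrow> 'n set set" where
  "cycle_edges vs = {{vs ! i, vs ! ((i + 1) mod length vs)} | i. i < length vs}"

definition is_cycle :: "('n::finite \<Rightarrow> 'n \<Rightarrow> bool) \<Rightarrow> 'n set set \<Rightarrow> bool" where
  "is_cycle E C \<longleftrightarrow> (\<exists>vs. length vs \<ge> 3 \<and> distinct vs \<and>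
      (\<forall>i < length vs. E (vs ! i) (vs ! ((i + 1) mod length vs))) \<and>
      C = cycle_edges vs)"

definition cycles_through :: "('n::finite \<Rightarrow> 'n \<Rightarrow> bool) \<Rightarrow> 'n \<Rightarrow> 'n set set set" where
  "cycles_through E v = {C. is_cycle E C \<and> v \<in> \<Union>C}"

definition S_graph :: "('n::finite \<Rightarrow> 'n \<Rightarrow> bool) \<Rightarrow> (real^'n^'n) set" where
  "S_graph E = {A. transpose A = A \<and> (\<forall>i j. i \<noteq> j \<longrightarrow> (A $ i $ j \<noteq> 0 \<longleftrightarrow> E i j))}"

definition SSP :: "real^'n^'n \<Rightarrow> bool" where
  "SSP A \<longleftrightarrow> (\<forall>X::real^'n^'n. transpose X = X \<and> (\<forall>i j. A $ i $ j * X $ i $ j = 0)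
      \<and> (\<forall>i. X $ i $ i = 0) \<and> A ** X - X ** A = 0 \<longrightarrow> X = 0)"

definition G_SSP :: "('n::finite \<Rightarrow> 'n \<Rightarrow> bool) set" where
  "G_SSP = {E. simple_graph E \<and> (\<forall>A \<in> S_graph E. SSP A)}"

end

(*
  Among four neighbours of v, none is joined in G - v to two others: the two
  connecting paths would close up with v into two different cycles through v.
  So the four split into pairs {a, b} and {c, d} such that the unions S1, S2 of
  the components of G - v containing them are disjoint. Put weight 1 on every
  edge except vb and vd, which get 1 - |N(v) \<inter> S1| and 1 - |N(v) \<inter> S2|, and
  choose the diagonal so that each row sums to zero when the column of v is
  ignored. The resulting A in S(G) has the indicator vectors x, y of S1, S2 as
  null vectors, and since no edge joins S1 to S2, X = x y^T + y x^T is a nonzero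
  witness against the SSP of A.
*)
theory Submission
  imports Defs "HOL-Library.Transitive_Closure_Table"
begin

lemma not_SSP_if_separated_null_vectors:
  fixes A :: "real^'n^'n" and x y :: "real^'n"
  assumes symmetric: "transpose A = A"
    and null: "A *v x = 0" "A *v y = 0"
    and disjoint_supports: "\<And>i. x $ i * y $ i = 0"
    and no_edges_between: "\<And>i j. x $ i * y $ j \<noteq> 0 \<Longrightarrow> A $ i $ j = 0"
    and nonzero: "x \<noteq> 0" "y \<noteq> 0"
  shows "\<not> SSP A"
proof
  assume ssp: "SSP A"
  define X :: "real^'n^'n" where "X = (\<chi> i j. x $ i * y $ j + y $ i * x $ j)"
  have X_symmetric: "transpose X = X"
    by (simp add: X_def transpose_def vec_eq_iff)
  have AX: "A ** X = 0"
  proof -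
    have "(A ** X) $ i $ j = (A *v x) $ i * y $ j + (A *v y) $ i * x $ j" for i j
      by (simp add: X_def matrix_matrix_mult_def matrix_vector_mult_def algebra_simps
          sum.distrib sum_distrib_left sum_distrib_right)
    then show ?thesis using null by (simp add: vec_eq_iff)
  qed
  have XA: "X ** A = 0"
  proof -
    have "X ** A = transpose (A ** X)"
      by (simp add: matrix_transpose_mul X_symmetric symmetric)
    then show ?thesis by (simp add: AX transpose_def vec_eq_iff)
  qed
  have "A $ i $ j * X $ i $ j = 0" for i j
  proof (cases "A $ i $ j = 0")
    case False
    moreover have "A $ j $ i = A $ i $ j"
      using symmetric by (metis transpose_def vec_lambda_beta)
    ultimately have "x $ i * y $ j = 0" "x $ j * y $ i = 0"
      using no_edges_between[of i j] no_edges_between[of j i] by auto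
    then show ?thesis by (auto simp: X_def mult.commute)
  qed simp
  moreover have "X $ i $ i = 0" for i
    using disjoint_supports[of i] by (simp add: X_def algebra_simps)
  ultimately have "X = 0"
    using ssp X_symmetric AX XA unfolding SSP_def by simp
  obtain i where "x $ i \<noteq> 0" using nonzero(1) by (auto simp: vec_eq_iff)
  obtain j where "y $ j \<noteq> 0" using nonzero(2) by (auto simp: vec_eq_iff)
  have "X $ i $ j = x $ i * y $ j"
    using disjoint_supports[of i] disjoint_supports[of j] \<open>x $ i \<noteq> 0\<close> \<open>y $ j \<noteq> 0\<close>
    by (simp add: X_def)
  then show False
    using \<open>X = 0\<close> \<open>x $ i \<noteq> 0\<close> \<open>y $ j \<noteq> 0\<close> by simp
qed

text \<open>S is a union of vertex sets of components of G - v.\<close>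
definition cut_off_by :: "('n \<Rightarrow> 'n \<Rightarrow> bool) \<Rightarrow> 'n \<Rightarrow> 'n set \<Rightarrow> bool" where
  "cut_off_by E v S \<longleftrightarrow> v \<notin> S \<and> (\<forall>j\<in>S. \<forall>k. E j k \<longrightarrow> k = v \<or> k \<in> S)"

definition weighted_laplacian_minus_vertex ::
    "('n::finite \<Rightarrow> 'n \<Rightarrow> bool) \<Rightarrow> 'n \<Rightarrow> ('n \<Rightarrow> 'n \<Rightarrow> real) \<Rightarrow> real^'n^'n" where
  "weighted_laplacian_minus_vertex E v w =
     (\<chi> i j. if i = j then - (\<Sum>k | E i k \<and> k \<noteq> v. w i k) else if E i j then w i j else 0)"

lemma weighted_laplacian_minus_vertex_in_S_graph:
  assumes "simple_graph E"
    and "\<And>i j. w i j = w j i" and "\<And>i j. E i j \<Longrightarrow> w i j \<noteq> 0"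
  shows "weighted_laplacian_minus_vertex E v w \<in> S_graph E"
  using assms unfolding S_graph_def simple_graph_def weighted_laplacian_minus_vertex_def
  by (auto simp: transpose_def vec_eq_iff)

lemma weighted_laplacian_minus_vertex_row_sum:
  fixes E :: "'n::finite \<Rightarrow> 'n \<Rightarrow> bool"
  assumes graph: "simple_graph E" and cut: "cut_off_by E v S"
    and balanced: "sum (w v) {k \<in> S. E v k} = 0"
  shows "(\<Sum>k\<in>S. weighted_laplacian_minus_vertex E v w $ i $ k) = 0"
proof -
  let ?A = "weighted_laplacian_minus_vertex E v w"
  have v_notin: "v \<notin> S" and closed: "\<And>j k. j \<in> S \<Longrightarrow> E j k \<Longrightarrow> k = v \<or> k \<in> S"
    using cut unfolding cut_off_by_def by auto
  have off_diagonal: "?A $ i $ k = (if E i k then w i k else 0)" if "k \<noteq> i" for k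
    using that by (simp add: weighted_laplacian_minus_vertex_def)
  consider "i \<in> S" | "i = v" | "i \<notin> S" "i \<noteq> v" by blast
  then show ?thesis
  proof cases
    case 1
    have neighbours: "{k \<in> S. k \<noteq> i \<and> E i k} = {k. E i k \<and> k \<noteq> v}"
      using closed[OF 1] v_notin graph unfolding simple_graph_def by auto
    have "(\<Sum>k\<in>S. ?A $ i $ k) = ?A $ i $ i + (\<Sum>k\<in>S - {i}. if E i k then w i k else 0)"
      using 1 off_diagonal by (simp add: sum.remove)
    also have "\<dots> = 0"
      by (simp add: sum.inter_filter[symmetric] neighbours weighted_laplacian_minus_vertex_def)
    finally show ?thesis .
  next
    case 2
    have "(\<Sum>k\<in>S. ?A $ i $ k) = (\<Sum>k\<in>S. if E v k then w v k else 0)"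
      using 2 v_notin by (intro sum.cong) (auto simp: weighted_laplacian_minus_vertex_def)
    then show ?thesis
      using balanced by (simp add: sum.inter_filter[symmetric])
  next
    case 3
    have "\<not> E i k" if "k \<in> S" for k
      using closed[OF that, of i] 3 graph unfolding simple_graph_def by auto
    then show ?thesis
      using 3 by (intro sum.neutral) (auto simp: weighted_laplacian_minus_vertex_def)
  qed
qed

lemma weighted_laplacian_minus_vertex_mult_indicator:
  fixes E :: "'n::finite \<Rightarrow> 'n \<Rightarrow> bool"
  assumes "simple_graph E" and "cut_off_by E v S"
    and "sum (w v) {k \<in> S. E v k} = 0"
  shows "weighted_laplacian_minus_vertex E v w *v (\<chi> k. indicator S k) = 0"
proof -
  have "(\<Sum>k\<in>UNIV. weighted_laplacian_minus_vertex E v w $ i $ k * indicator S k) = 0" for i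
    using weighted_laplacian_minus_vertex_row_sum[where w = w, OF assms]
    by (simp add: indicator_def if_distrib sum.If_cases)
  then show ?thesis
    by (simp add: matrix_vector_mult_def vec_eq_iff)
qed

lemma sum_if_one_minus_card_else_one_eq_0:
  assumes "finite T" and "b \<in> T"
  shows "(\<Sum>k\<in>T. if k = b then 1 - real (card T) else 1) = 0"
proof -
  have "(\<Sum>k\<in>T. if k = b then 1 - real (card T) else 1) = (1 - real (card T)) + real (card (T - {b}))"
    using assms by (simp add: sum.remove)
  moreover have "1 \<le> card T"
    using assms by (auto simp: Suc_le_eq card_gt_0_iff)
  ultimately show ?thesis
    using assms by (simp add: of_nat_diff)
qed

lemma not_in_G_SSP_if_two_cut_off_sets:
  fixes E :: "'n::finite \<Rightarrow> 'n \<Rightarrow> bool"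
  assumes graph: "simple_graph E"
    and cut: "cut_off_by E v S\<^sub>1" "cut_off_by E v S\<^sub>2" and disjoint: "S\<^sub>1 \<inter> S\<^sub>2 = {}"
    and many_neighbours: "2 \<le> card {k \<in> S\<^sub>1. E v k}" "2 \<le> card {k \<in> S\<^sub>2. E v k}"
  shows "E \<notin> G_SSP"
proof
  assume "E \<in> G_SSP"
  define T\<^sub>1 where "T\<^sub>1 = {k \<in> S\<^sub>1. E v k}"
  define T\<^sub>2 where "T\<^sub>2 = {k \<in> S\<^sub>2. E v k}"
  obtain b d where b: "b \<in> T\<^sub>1" and d: "d \<in> T\<^sub>2"
    using many_neighbours unfolding T\<^sub>1_def T\<^sub>2_def
    by (metis card.empty equals0I not_numeral_le_zero)
  define w where
    "w i j = (if {i, j} = {v, b} then 1 - real (card T\<^sub>1)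
              else if {i, j} = {v, d} then 1 - real (card T\<^sub>2) else 1)" for i j
  define A where "A = weighted_laplacian_minus_vertex E v w"
  have "v \<notin> S\<^sub>1" "v \<notin> S\<^sub>2"
    using cut unfolding cut_off_by_def by auto
  then have "b \<noteq> v" "d \<noteq> v" "b \<noteq> d" "T\<^sub>1 \<inter> T\<^sub>2 = {}"
    using b d disjoint unfolding T\<^sub>1_def T\<^sub>2_def by auto
  then have weights_at_v:
    "k \<in> T\<^sub>1 \<Longrightarrow> w v k = (if k = b then 1 - real (card T\<^sub>1) else 1)"
    "k \<in> T\<^sub>2 \<Longrightarrow> w v k = (if k = d then 1 - real (card T\<^sub>2) else 1)" for k
    using b d by (auto simp: w_def doubleton_eq_iff)
  have "2 \<le> card T\<^sub>1" "2 \<le> card T\<^sub>2"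
    using many_neighbours unfolding T\<^sub>1_def T\<^sub>2_def by auto
  then have "w i j \<noteq> 0" for i j
    by (simp add: w_def)
  moreover have "w i j = w j i" for i j
    by (simp add: w_def insert_commute)
  ultimately have "A \<in> S_graph E"
    unfolding A_def using weighted_laplacian_minus_vertex_in_S_graph[OF graph] by blast
  then have ssp: "SSP A"
    using \<open>E \<in> G_SSP\<close> unfolding G_SSP_def by blast
  have "sum (w v) T\<^sub>1 = (\<Sum>k\<in>T\<^sub>1. if k = b then 1 - real (card T\<^sub>1) else 1)"
    "sum (w v) T\<^sub>2 = (\<Sum>k\<in>T\<^sub>2. if k = d then 1 - real (card T\<^sub>2) else 1)"
    by (simp_all add: weights_at_v cong: sum.cong)
  then have "sum (w v) T\<^sub>1 = 0" "sum (w v) T\<^sub>2 = 0"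
    using b d by (simp_all add: sum_if_one_minus_card_else_one_eq_0)
  then have "A *v (\<chi> k. indicator S\<^sub>1 k) = 0" "A *v (\<chi> k. indicator S\<^sub>2 k) = 0"
    unfolding A_def T\<^sub>1_def T\<^sub>2_def
    using weighted_laplacian_minus_vertex_mult_indicator[OF graph] cut by blast+
  moreover have "A $ i $ j = 0" if "i \<in> S\<^sub>1" "j \<in> S\<^sub>2" for i j
    using that cut disjoint unfolding A_def cut_off_by_def weighted_laplacian_minus_vertex_def
    by auto
  moreover have "transpose A = A"
    using \<open>A \<in> S_graph E\<close> unfolding S_graph_def by blast
  moreover have "(\<chi> k. indicator S\<^sub>1 k) \<noteq> (0 :: real^'n)" "(\<chi> k. indicator S\<^sub>2 k) \<noteq> (0 :: real^'n)"
    using b d unfolding T\<^sub>1_def T\<^sub>2_def by (auto simp: vec_eq_iff indicator_def)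
  ultimately have "\<not> SSP A"
    using disjoint
    by (intro not_SSP_if_separated_null_vectors[of A "\<chi> k. indicator S\<^sub>1 k" "\<chi> k. indicator S\<^sub>2 k"])
      (auto simp: indicator_def)
  then show False
    using ssp by blast
qed

definition delete_vertex :: "('n \<Rightarrow> 'n \<Rightarrow> bool) \<Rightarrow> 'n \<Rightarrow> 'n \<Rightarrow> 'n \<Rightarrow> bool" where
  "delete_vertex E v a b \<longleftrightarrow> E a b \<and> a \<noteq> v \<and> b \<noteq> v"

lemma symp_delete_vertex: "simple_graph E \<Longrightarrow> symp (delete_vertex E v)"
  unfolding simple_graph_def delete_vertex_def symp_def by blast

lemma cut_off_by_component:
  assumes "a \<noteq> v"
  shows "cut_off_by E v {y. (delete_vertex E v)\<^sup>*\<^sup>* a y}"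
proof -
  have "y \<noteq> v" if "(delete_vertex E v)\<^sup>*\<^sup>* a y" for y
    using that assms by (cases rule: rtranclp.cases) (auto simp: delete_vertex_def)
  then show ?thesis
    unfolding cut_off_by_def by (auto simp: delete_vertex_def intro: rtranclp.rtrancl_into_rtrancl)
qed

lemma cut_off_by_Un: "cut_off_by E v S \<Longrightarrow> cut_off_by E v T \<Longrightarrow> cut_off_by E v (S \<union> T)"
  unfolding cut_off_by_def by blast

lemma successively_rtrancl_path: "rtrancl_path r x xs y \<Longrightarrow> successively r (x # xs)"
  by (induction rule: rtrancl_path.induct) auto

lemma cyclically_adjacent_iff_successively:
  assumes "vs \<noteq> []"
  shows "(\<forall>i < length vs. R (vs ! i) (vs ! ((i + 1) mod length vs))) \<longleftrightarrow>
    successively R (vs @ [hd vs])"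
proof -
  have "vs ! ((i + 1) mod length vs) = (vs @ [hd vs]) ! Suc i" if "i < length vs" for i
    using that assms by (cases "Suc i = length vs") (auto simp: nth_append hd_conv_nth)
  then show ?thesis
    by (auto simp: successively_conv_nth nth_append)
qed

lemma is_cycle_Cons:
  assumes "distinct (v # ws)" "2 \<le> length ws" "successively E ws"
    and "E v (hd ws)" "E (last ws) v"
  shows "is_cycle E (cycle_edges (v # ws))"
proof -
  have "ws \<noteq> []"
    using assms(2) by auto
  then have "successively E ((v # ws) @ [hd (v # ws)])"
    using assms by (simp add: successively_Cons successively_append_iff hd_append)
  then show ?thesis
    unfolding is_cycle_def using assms cyclically_adjacent_iff_successively[of "v # ws" E]
    by (intro exI[of _ "v # ws"]) auto
qed

lemma edge_at_head_in_cycle_edges_iff: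
  assumes "distinct (v # ws)" "ws \<noteq> []"
  shows "{v, z} \<in> cycle_edges (v # ws) \<longleftrightarrow> z = hd ws \<or> z = last ws"
proof
  let ?n = "length (v # ws)"
  have v_index: "(v # ws) ! i = v \<longleftrightarrow> i = 0" if "i < ?n" for i
    using assms(1) that nth_eq_iff_index_eq[of "v # ws" i 0] by auto
  assume "{v, z} \<in> cycle_edges (v # ws)"
  then obtain i where i: "i < ?n" and edge: "{v, z} = {(v # ws) ! i, (v # ws) ! ((i + 1) mod ?n)}"
    unfolding cycle_edges_def by blast
  then have "(v # ws) ! i = v \<or> (v # ws) ! ((i + 1) mod ?n) = v"
    by (auto simp: doubleton_eq_iff)
  then have "i = 0 \<or> (i + 1) mod ?n = 0"
    using v_index i by (metis mod_less_divisor zero_less_Suc length_Cons)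
  then have "i = 0 \<or> i = length ws"
    using i by (auto simp: mod_Suc split: if_splits)
  then show "z = hd ws \<or> z = last ws"
    using edge assms(2) by (auto simp: doubleton_eq_iff hd_conv_nth last_conv_nth)
next
  assume "z = hd ws \<or> z = last ws"
  moreover have "{v, hd ws} \<in> cycle_edges (v # ws)"
    using assms(2) unfolding cycle_edges_def by (force simp: hd_conv_nth)
  moreover have "{v, last ws} \<in> cycle_edges (v # ws)"
    using assms(2) unfolding cycle_edges_def
    by (auto intro!: exI[of _ "length ws"] simp: last_conv_nth insert_commute)
  ultimately show "{v, z} \<in> cycle_edges (v # ws)"
    by blast
qed

lemma obtain_cycle_through_connected_neighbours:
  fixes E :: "'n::finite \<Rightarrow> 'n \<Rightarrow> bool"
  assumes graph: "simple_graph E" and neighbours: "E v x" "E v y" "x \<noteq> y"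
    and connected: "(delete_vertex E v)\<^sup>*\<^sup>* x y"
  obtains C where "C \<in> cycles_through E v" "\<And>z. {v, z} \<in> C \<longleftrightarrow> z = x \<or> z = y"
proof -
  obtain xs where path: "rtrancl_path (delete_vertex E v) x xs y" and "distinct (x # xs)"
    using connected rtranclp_eq_rtrancl_path rtrancl_path_distinct by metis
  have "xs \<noteq> []"
    using path \<open>x \<noteq> y\<close> by (auto elim: rtrancl_path.cases)
  then have last: "last (x # xs) = y"
    using path rtrancl_path_last by fastforce
  have "x \<noteq> v"
    using graph neighbours unfolding simple_graph_def by auto
  moreover have "v \<notin> set xs"
    using rtrancl_path_Range[OF path, of v] by (auto simp: delete_vertex_def)
  ultimately have distinct: "distinct (v # x # xs)"
    using \<open>distinct (x # xs)\<close> by auto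
  have "successively E (x # xs)"
    using successively_rtrancl_path[OF path]
    by (rule successively_mono) (auto simp: delete_vertex_def)
  moreover have "E y v"
    using graph neighbours unfolding simple_graph_def by auto
  ultimately have "is_cycle E (cycle_edges (v # x # xs))"
    using neighbours distinct last \<open>xs \<noteq> []\<close> by (intro is_cycle_Cons) (auto simp: Suc_le_eq)
  moreover have v_edges: "{v, z} \<in> cycle_edges (v # x # xs) \<longleftrightarrow> z = x \<or> z = y" for z
    using edge_at_head_in_cycle_edges_iff[OF distinct] last by simp
  ultimately have "cycle_edges (v # x # xs) \<in> cycles_through E v"
    unfolding cycles_through_def by blast
  with v_edges show thesis
    using that by blast
qed

lemma two_cycles_through_if_connected_neighbours:
  fixes E :: "'n::finite \<Rightarrow> 'n \<Rightarrow> bool"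
  assumes graph: "simple_graph E" and neighbours: "E v u\<^sub>1" "E v u\<^sub>2" "E v u\<^sub>3"
    and distinct: "distinct [u\<^sub>1, u\<^sub>2, u\<^sub>3]"
    and connected: "(delete_vertex E v)\<^sup>*\<^sup>* u\<^sub>1 u\<^sub>2" "(delete_vertex E v)\<^sup>*\<^sup>* u\<^sub>1 u\<^sub>3"
  shows "2 \<le> card (cycles_through E v)"
proof -
  have "u\<^sub>1 \<noteq> u\<^sub>2" "u\<^sub>1 \<noteq> u\<^sub>3"
    using distinct by auto
  obtain C\<^sub>2 where C\<^sub>2: "C\<^sub>2 \<in> cycles_through E v" "\<And>z. {v, z} \<in> C\<^sub>2 \<longleftrightarrow> z = u\<^sub>1 \<or> z = u\<^sub>2"
    using obtain_cycle_through_connected_neighbours[OF graph neighbours(1,2) \<open>u\<^sub>1 \<noteq> u\<^sub>2\<close> connected(1)]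
    by blast
  obtain C\<^sub>3 where C\<^sub>3: "C\<^sub>3 \<in> cycles_through E v" "\<And>z. {v, z} \<in> C\<^sub>3 \<longleftrightarrow> z = u\<^sub>1 \<or> z = u\<^sub>3"
    using obtain_cycle_through_connected_neighbours[OF graph neighbours(1,3) \<open>u\<^sub>1 \<noteq> u\<^sub>3\<close> connected(2)]
    by blast
  have "C\<^sub>2 \<noteq> C\<^sub>3"
    using C\<^sub>2(2)[of u\<^sub>3] C\<^sub>3(2)[of u\<^sub>3] distinct by auto
  then have "card {C\<^sub>2, C\<^sub>3} = 2"
    by simp
  moreover have "{C\<^sub>2, C\<^sub>3} \<subseteq> cycles_through E v"
    using C\<^sub>2 C\<^sub>3 by blast
  ultimately show ?thesis
    by (metis card_mono finite)
qed

lemma obtain_unrelated_pairs: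
  assumes "4 \<le> card U" and "transp R"
    and at_most_one: "\<And>p q r. {p, q, r} \<subseteq> U \<Longrightarrow> distinct [p, q, r] \<Longrightarrow> R p q \<Longrightarrow> R p r \<Longrightarrow> False"
  obtains a b c d where "{a, b, c, d} \<subseteq> U" "a \<noteq> b" "c \<noteq> d"
    "\<not> R a c" "\<not> R a d" "\<not> R b c" "\<not> R b d"
proof -
  obtain F where F: "F \<subseteq> U" "card F = 4"
    using assms(1) obtain_subset_with_card_n by blast
  obtain a b where ab: "{a, b} \<subseteq> F" "a \<noteq> b"
    and related_or_none: "R a b \<or> (\<forall>p\<in>F. \<forall>q\<in>F. R p q \<longrightarrow> p = q)"
  proof (cases "\<exists>p\<in>F. \<exists>q\<in>F. p \<noteq> q \<and> R p q")
    case False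
    have "2 \<le> card F"
      using F by simp
    then obtain T where "T \<subseteq> F" "card T = 2"
      by (rule obtain_subset_with_card_n)
    then obtain a b where "{a, b} \<subseteq> F" "a \<noteq> b"
      by (auto simp: card_2_iff)
    with False show thesis
      using that by blast
  qed (use that in blast)
  have "card (F - {a, b}) = 2"
    using ab F by (simp add: card_Diff_subset card_insert_if finite_subset)
  then obtain c d where cd: "F - {a, b} = {c, d}" "c \<noteq> d"
    by (auto simp: card_2_iff)
  have "\<not> R a x \<and> \<not> R b x" if "x \<in> {c, d}" for x
    using related_or_none
  proof
    assume "R a b"
    moreover have "\<not> R a x"
      using at_most_one[of a b x] \<open>R a b\<close> ab cd F that by auto
    ultimately show ?thesis
      using \<open>transp R\<close> by (meson transpD)
  next
    assume "\<forall>p\<in>F. \<forall>q\<in>F. R p q \<longrightarrow> p = q"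
    then show ?thesis
      using ab cd that by blast
  qed
  moreover have "{a, b, c, d} \<subseteq> U"
    using ab cd F by blast
  ultimately show thesis
    using that \<open>a \<noteq> b\<close> \<open>c \<noteq> d\<close> by simp
qed

lemma not_in_G_SSP_if_separated_neighbour_pairs:
  fixes E :: "'n::finite \<Rightarrow> 'n \<Rightarrow> bool"
  assumes graph: "simple_graph E"
    and neighbours: "E v a" "E v b" "E v c" "E v d" and "a \<noteq> b" "c \<noteq> d"
    and separated: "\<And>p q. p \<in> {a, b} \<Longrightarrow> q \<in> {c, d} \<Longrightarrow> \<not> (delete_vertex E v)\<^sup>*\<^sup>* p q"
  shows "E \<notin> G_SSP"
proof -
  let ?component = "\<lambda>x. {y. (delete_vertex E v)\<^sup>*\<^sup>* x y}"
  define S\<^sub>1 where "S\<^sub>1 = ?component a \<union> ?component b"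
  define S\<^sub>2 where "S\<^sub>2 = ?component c \<union> ?component d"
  have "a \<noteq> v" "b \<noteq> v" "c \<noteq> v" "d \<noteq> v"
    using graph neighbours unfolding simple_graph_def by auto
  then have "cut_off_by E v S\<^sub>1" "cut_off_by E v S\<^sub>2"
    unfolding S\<^sub>1_def S\<^sub>2_def by (simp_all add: cut_off_by_Un cut_off_by_component)
  moreover have "S\<^sub>1 \<inter> S\<^sub>2 = {}"
  proof -
    have symmetric: "(delete_vertex E v)\<^sup>*\<^sup>* y x" if "(delete_vertex E v)\<^sup>*\<^sup>* x y" for x y
      using that sympD[OF symp_rtranclp[OF symp_delete_vertex[OF graph]]] by blast
    have "z \<notin> ?component q" if "p \<in> {a, b}" "q \<in> {c, d}" "z \<in> ?component p" for p q z
      using that separated[OF that(1,2)] rtranclp_trans[OF _ symmetric] by blast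
    then show ?thesis
      unfolding S\<^sub>1_def S\<^sub>2_def by blast
  qed
  moreover have "2 \<le> card {k \<in> S\<^sub>1. E v k}" "2 \<le> card {k \<in> S\<^sub>2. E v k}"
  proof -
    have "{a, b} \<subseteq> {k \<in> S\<^sub>1. E v k}" "{c, d} \<subseteq> {k \<in> S\<^sub>2. E v k}"
      using neighbours unfolding S\<^sub>1_def S\<^sub>2_def by auto
    then have "card {a, b} \<le> card {k \<in> S\<^sub>1. E v k}" "card {c, d} \<le> card {k \<in> S\<^sub>2. E v k}"
      by (simp_all add: card_mono)
    then show "2 \<le> card {k \<in> S\<^sub>1. E v k}" "2 \<le> card {k \<in> S\<^sub>2. E v k}"
      using \<open>a \<noteq> b\<close> \<open>c \<noteq> d\<close> by simp_all
  qed
  ultimately show ?thesis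
    using not_in_G_SSP_if_two_cut_off_sets[OF graph] by blast
qed

theorem corollary2p7:
  fixes E :: "'n::finite \<Rightarrow> 'n \<Rightarrow> bool" and v :: 'n
  assumes "simple_graph E"
    and "degree E v \<ge> 4"
    and "card (cycles_through E v) \<le> 1"
  shows "E \<notin> G_SSP"
proof -
  let ?connected = "(delete_vertex E v)\<^sup>*\<^sup>*"
  have "4 \<le> card {u. E v u}"
    using assms(2) unfolding degree_def .
  moreover have "transp ?connected"
    by simp
  moreover have False
    if "{p, q, r} \<subseteq> {u. E v u}" "distinct [p, q, r]" "?connected p q" "?connected p r" for p q r
    using two_cycles_through_if_connected_neighbours[OF assms(1), of v p q r] that assms(3) by auto
  ultimately obtain a b c d where "{a, b, c, d} \<subseteq> {u. E v u}" "a \<noteq> b" "c \<noteq> d"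
    "\<not> ?connected a c" "\<not> ?connected a d" "\<not> ?connected b c" "\<not> ?connected b d"
    by (rule obtain_unrelated_pairs)
  then show ?thesis
    using not_in_G_SSP_if_separated_neighbour_pairs[OF assms(1), of v a b c d] by auto
qed

end
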